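(* Let $k\in\mathbb{R}_{\ge0}$, let $(x_j,y_j,z_j)$ be a triple of the classical Euclid tree and $(X_j,Y_j,Z_j)$ the corresponding triple of the $k$-generalized Euclid tree, with comparison triple $(l_j,m_j,n_j)=(X_j/x_j,Y_j/y_j,Z_j/z_j)$. For $i\in\{1,2,3\}$ let $(l_{j+1},m_{j+1},n_{j+1})$ be the comparison triple of $\mathcal{M}_i(x_j,y_j,z_j)$ and $\mathcal{M}_{i;k}(X_j,Y_j,Z_j)$. Then: (1) if $m_j<n_j$ and $i=1$: $l_{j+1}\in[m_j,n_j]\iff k\le y_j(n_j-m_j)$; (2) if $n_j<m_j$ and $i=1$: $l_{j+1}\in[n_j,m_j]\iff k\le z_j(m_j-n_j)$; (3) if $l_j<n_j$ and $i=2$: $m_{j+1}\in[l_j,n_j]\iff k\le x_j(n_j-l_j)$; (4) if $n_j<l_j$ and $i=2$: $m_{j+1}\in[n_j,l_j]\iff k\le z_j(l_j-n_j)$; (5) if $l_j<m_j$ and $i=3$: $n_{j+1}\in[l_j,m_j]\iff k\le x_j(m_j-l_j)$; (6) if $m_j<l_j$ and $i=3$: $n_{j+1}\in[m_j,l_j]\iff k\le y_j(l_j-m_j)$. Moreover, if the inequality for $k$ holds strictly, the mutated component lies in the corresponding open interval.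
   Context: For $k\in\mathbb{R}_{\ge0}$: $\mathcal{M}_{1;k}(X,Y,Z)=(k+Y+Z,Y,Z)$, $\mathcal{M}_{2;k}(X,Y,Z)=(X,k+X+Z,Z)$, $\mathcal{M}_{3;k}(X,Y,Z)=(X,Y,k+X+Y)$ on $\mathbb{R}_+^3$, and $\mathcal{M}_i=\mathcal{M}_{i;0}$. The classical Euclid tree consists of the triples obtained from a $0$-initial triple $(a,b,c)\in\mathbb{R}_+^3$ by compositions of $\mathcal{M}_i$ along finite reduced sequences (consecutive indices distinct), and the $k$-generalized Euclid tree those obtained from a $k$-initial triple $(A,B,C)\in\mathbb{R}_+^3$ ($A\ne B+C+k$, $B\ne A+C+k$, $C\ne A+B+k$) by compositions of $\mathcal{M}_{i;k}$; corresponding triples are those obtained by the same sequence of indices. *)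

theory Defs
  imports Main "HOL.Real"
begin

type_synonym triple = "real \<times> real \<times> real"

text \<open>The mutation M_{i;k}; M_i is M_{i;0}.\<close>
fun mut :: "real \<Rightarrow> nat \<Rightarrow> triple \<Rightarrow> triple" where
  "mut k i (X, Y, Z) =
     (if i = 1 then (k + Y + Z, Y, Z)
      else if i = 2 then (X, k + X + Z, Z)
      else if i = 3 then (X, Y, k + X + Y)
      else (X, Y, Z))"

definition mut_seq :: "real \<Rightarrow> nat list \<Rightarrow> triple \<Rightarrow> triple" where
  "mut_seq k s t = foldl (\<lambda>u i. mut k i u) t s"

definition reduced_seq :: "nat list \<Rightarrow> bool" where
  "reduced_seq s \<longleftrightarrow> set s \<subseteq> {1,2,3} \<and> (\<forall>j. Suc j < length s \<longrightarrow> s ! j \<noteq> s ! Suc j)"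

definition pos_triple :: "triple \<Rightarrow> bool" where
  "pos_triple t \<longleftrightarrow> (case t of (A, B, C) \<Rightarrow> A > 0 \<and> B > 0 \<and> C > 0)"

definition k_initial :: "real \<Rightarrow> triple \<Rightarrow> bool" where
  "k_initial k t \<longleftrightarrow> pos_triple t \<and>
     (case t of (A, B, C) \<Rightarrow> A \<noteq> B + C + k \<and> B \<noteq> A + C + k \<and> C \<noteq> A + B + k)"

fun comp_triple :: "triple \<Rightarrow> triple \<Rightarrow> triple" where
  "comp_triple (x, y, z) (X, Y, Z) = (X / x, Y / y, Z / z)"

end

theory Submission
  imports Defs
begin

text \<open>Mutation i replaces the i-th comparison entry by the mean of the other two, weighted by
  the corresponding classical coordinates and shifted by k divided by the sum of those weights.
  Such a value always exceeds the smaller of the two entries, and it stays below the larger one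
  exactly while k is at most the gap times the weight of the smaller entry. The argument needs
  only positivity of the classical triple, which mutations preserve.\<close>

lemma shifted_weighted_mean_bounds:
  fixes k p q u v :: real
  assumes "u > 0" "v > 0" "p < q" "k \<ge> 0"
  shows "(k + p * u + q * v) / (u + v) \<in> {p..q} \<longleftrightarrow> k \<le> u * (q - p)"
    and "k < u * (q - p) \<Longrightarrow> (k + p * u + q * v) / (u + v) \<in> {p<..<q}"
proof -
  define w where "w = (k + p * u + q * v) / (u + v)"
  have "w - p = (k + (q - p) * v) / (u + v)"
    using assms by (simp add: w_def field_simps)
  also have "\<dots> > 0"
    using assms by (intro divide_pos_pos add_nonneg_pos mult_pos_pos) auto
  finally have above: "p < w"
    by simp
  have below: "q - w = (u * (q - p) - k) / (u + v)"
    using assms by (simp add: w_def field_simps)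
  have "0 \<le> q - w \<longleftrightarrow> 0 \<le> u * (q - p) - k" "0 < q - w \<longleftrightarrow> 0 < u * (q - p) - k"
    unfolding below using assms by (simp_all add: zero_le_divide_iff zero_less_divide_iff)
  then have "w \<le> q \<longleftrightarrow> k \<le> u * (q - p)" "w < q \<longleftrightarrow> k < u * (q - p)"
    by simp_all
  with above show "w \<in> {p..q} \<longleftrightarrow> k \<le> u * (q - p)" "k < u * (q - p) \<Longrightarrow> w \<in> {p<..<q}"
    by auto
qed

lemma pos_triple_mut: "k \<ge> 0 \<Longrightarrow> pos_triple t \<Longrightarrow> pos_triple (mut k i t)"
  by (cases t) (auto simp: pos_triple_def)

lemma pos_triple_mut_seq: "k \<ge> 0 \<Longrightarrow> pos_triple t \<Longrightarrow> pos_triple (mut_seq k s t)"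
  by (induction s arbitrary: t) (simp_all add: mut_seq_def pos_triple_mut)

lemma comp_triple_mut:
  fixes x y z l m n :: real
  assumes "x > 0" "y > 0" "z > 0"
  shows "comp_triple (mut 0 1 (x, y, z)) (mut k 1 (l * x, m * y, n * z))
           = ((k + m * y + n * z) / (y + z), m, n)"
    and "comp_triple (mut 0 2 (x, y, z)) (mut k 2 (l * x, m * y, n * z))
           = (l, (k + l * x + n * z) / (x + z), n)"
    and "comp_triple (mut 0 3 (x, y, z)) (mut k 3 (l * x, m * y, n * z))
           = (l, m, (k + l * x + m * y) / (x + y))"
  using assms by (simp_all add: add.assoc)

theorem lemma4p2:
  fixes k :: real and s :: "nat list" and i :: nat
    and a b c A B C x y z X Y Z l m n l' m' n' :: real
  assumes hk: "k \<ge> 0"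
    and init0: "k_initial 0 (a, b, c)"
    and initk: "k_initial k (A, B, C)"
    and red: "reduced_seq s"
    and cl: "mut_seq 0 s (a, b, c) = (x, y, z)"
    and gen: "mut_seq k s (A, B, C) = (X, Y, Z)"
    and cmp: "comp_triple (x, y, z) (X, Y, Z) = (l, m, n)"
    and hi: "i \<in> {1, 2, 3}"
    and cmp': "comp_triple (mut 0 i (x, y, z)) (mut k i (X, Y, Z)) = (l', m', n')"
  shows
   "(m < n \<and> i = 1 \<longrightarrow> (l' \<in> {m..n} \<longleftrightarrow> k \<le> y * (n - m)) \<and> (k < y * (n - m) \<longrightarrow> l' \<in> {m<..<n})) \<and>
    (n < m \<and> i = 1 \<longrightarrow> (l' \<in> {n..m} \<longleftrightarrow> k \<le> z * (m - n)) \<and> (k < z * (m - n) \<longrightarrow> l' \<in> {n<..<m})) \<and>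
    (l < n \<and> i = 2 \<longrightarrow> (m' \<in> {l..n} \<longleftrightarrow> k \<le> x * (n - l)) \<and> (k < x * (n - l) \<longrightarrow> m' \<in> {l<..<n})) \<and>
    (n < l \<and> i = 2 \<longrightarrow> (m' \<in> {n..l} \<longleftrightarrow> k \<le> z * (l - n)) \<and> (k < z * (l - n) \<longrightarrow> m' \<in> {n<..<l})) \<and>
    (l < m \<and> i = 3 \<longrightarrow> (n' \<in> {l..m} \<longleftrightarrow> k \<le> x * (m - l)) \<and> (k < x * (m - l) \<longrightarrow> n' \<in> {l<..<m})) \<and>
    (m < l \<and> i = 3 \<longrightarrow> (n' \<in> {m..l} \<longleftrightarrow> k \<le> y * (l - m)) \<and> (k < y * (l - m) \<longrightarrow> n' \<in> {m<..<l}))"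
proof -
  have "pos_triple (x, y, z)"
    using pos_triple_mut_seq[of 0 "(a, b, c)" s] init0 cl by (simp add: k_initial_def)
  then have pos: "x > 0" "y > 0" "z > 0"
    by (auto simp: pos_triple_def)
  with cmp have "(X, Y, Z) = (l * x, m * y, n * z)"
    by auto
  with cmp' comp_triple_mut[OF pos, of k l m n]
  have l': "i = 1 \<Longrightarrow> l' = (k + m * y + n * z) / (y + z)"
    and m': "i = 2 \<Longrightarrow> m' = (k + l * x + n * z) / (x + z)"
    and n': "i = 3 \<Longrightarrow> n' = (k + l * x + m * y) / (x + y)"
    by auto
  note bounds = shifted_weighted_mean_bounds[OF _ _ _ hk]
  show ?thesis
    using l' m' n' pos
      bounds[of y z m n] bounds[of z y n m] bounds[of x z l n]
      bounds[of z x n l] bounds[of x y l m] bounds[of y x m l]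
    by (simp add: ac_simps)
qed

end
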